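(* Fix non-negative integers $r$ and $m\ge1$. Let $b_j=(1^j,2^j,\dots,m^j)^T\in\mathbb{R}^m$ for $j=0,\dots,r$, and let $\tilde b_0=b_0$ and $\tilde b_j=b_j-\Pi_{j-1}b_j$ for $j\ge1$, where $\Pi_{j-1}$ is the orthogonal projection onto $\mathrm{Span}(b_0,\dots,b_{j-1})$ (Gram–Schmidt orthogonalization without normalization). Then for each $j\in\{0,\dots,r\}$ there is a constant $c_r>0$ depending only on $r$ such that $$\|\tilde b_j\|_\infty\le c_r\,m^j.$$ *)

theory Defs
  imports Complex_Main
begin

text \<open>Vectors in R^m are represented as functions nat \<Rightarrow> real; coordinate i (0-based,
  i < m) corresponds to the paper's coordinate i+1. All vectors used here vanish for i \<ge> m.\<close>

definition bvec :: "nat \<Rightarrow> nat \<Rightarrow> nat \<Rightarrow> real" where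
  "bvec m j = (\<lambda>i. if i < m then real (i + 1) ^ j else 0)"

definition inner_m :: "nat \<Rightarrow> (nat \<Rightarrow> real) \<Rightarrow> (nat \<Rightarrow> real) \<Rightarrow> real" where
  "inner_m m x y = (\<Sum>i<m. x i * y i)"

definition in_span_b :: "nat \<Rightarrow> nat \<Rightarrow> (nat \<Rightarrow> real) \<Rightarrow> bool" where
  "in_span_b m j w \<longleftrightarrow> (\<exists>a :: nat \<Rightarrow> real. w = (\<lambda>i. \<Sum>k<j. a k * bvec m k i))"

definition proj_b :: "nat \<Rightarrow> nat \<Rightarrow> (nat \<Rightarrow> real) \<Rightarrow> (nat \<Rightarrow> real)" where
  "proj_b m j v = (THE w. in_span_b m j w \<and>
       (\<forall>k<j. inner_m m (\<lambda>i. v i - w i) (bvec m k) = 0))"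

definition btilde :: "nat \<Rightarrow> nat \<Rightarrow> nat \<Rightarrow> real" where
  "btilde m j = (if j = 0 then bvec m 0
                 else (\<lambda>i. bvec m j i - proj_b m j (bvec m j) i))"

definition linf :: "nat \<Rightarrow> (nat \<Rightarrow> real) \<Rightarrow> real" where
  "linf m x = Max ((\<lambda>i. \<bar>x i\<bar>) ` {..<m})"

end

theory Submission
  imports Defs "HOL-Computational_Algebra.Polynomial"
begin

text \<open>The vector \<open>btilde m j\<close> lists the values at \<open>1, \<dots>, m\<close> of the monic polynomial \<open>P\<^sub>j\<close>
  of degree \<open>j\<close> orthogonal to all lower degrees for the discrete inner product
  \<open>\<langle>p, q\<rangle> = \<Sum>\<^sub>t p(t) q(t)\<close> over the nodes \<open>t \<in> {1..m}\<close>. These polynomials satisfy the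
  three-term recurrence \<open>P\<^sub>n\<^sub>+\<^sub>1 = (x - \<alpha>\<^sub>n) P\<^sub>n - \<beta>\<^sub>n P\<^sub>n\<^sub>-\<^sub>1\<close> with
  \<open>\<alpha>\<^sub>n = \<langle>x P\<^sub>n, P\<^sub>n\<rangle> / \<langle>P\<^sub>n, P\<^sub>n\<rangle> \<in> [0, m]\<close> and
  \<open>\<beta>\<^sub>n = \<langle>P\<^sub>n, P\<^sub>n\<rangle> / \<langle>P\<^sub>n\<^sub>-\<^sub>1, P\<^sub>n\<^sub>-\<^sub>1\<rangle> \<in> [0, m\<^sup>2]\<close>; the bound on \<open>\<beta>\<^sub>n\<close> holds
  because \<open>P\<^sub>n\<close> is the part of \<open>x P\<^sub>n\<^sub>-\<^sub>1\<close> orthogonal to lower degrees, so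
  \<open>\<parallel>P\<^sub>n\<parallel> \<le> \<parallel>x P\<^sub>n\<^sub>-\<^sub>1\<parallel> \<le> m \<parallel>P\<^sub>n\<^sub>-\<^sub>1\<parallel>\<close>. Induction along the recurrence gives
  \<open>|P\<^sub>n(x)| \<le> m |P\<^sub>n\<^sub>-\<^sub>1(x)| + m\<^sup>2 |P\<^sub>n\<^sub>-\<^sub>2(x)| \<le> (2m)\<^sup>n\<close> on \<open>[0, m]\<close>, so \<open>c\<^sub>r = 2\<^sup>r\<close> works.
  The argument applies verbatim to any finite set of nodes in \<open>[0, M]\<close>.\<close>

definition node_inner :: "real set \<Rightarrow> real poly \<Rightarrow> real poly \<Rightarrow> real" where
  "node_inner S p q = (\<Sum>t\<in>S. poly p t * poly q t)"

text \<open>Once \<open>n \<ge> card S\<close>, \<open>P\<^sub>n\<close> vanishes on \<open>S\<close> and the quotients below take the junk value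
  \<open>x / 0 = 0\<close>; the results below cover this case as well.\<close>

definition rec_alpha :: "real set \<Rightarrow> real poly \<Rightarrow> real" where
  "rec_alpha S p = node_inner S ([:0, 1:] * p) p / node_inner S p p"

definition rec_beta :: "real set \<Rightarrow> real poly \<Rightarrow> real poly \<Rightarrow> real" where
  "rec_beta S p q = node_inner S p p / node_inner S q q"

fun orth_poly :: "real set \<Rightarrow> nat \<Rightarrow> real poly" where
  "orth_poly S 0 = 1"
| "orth_poly S (Suc 0) = [:- rec_alpha S 1, 1:]"
| "orth_poly S (Suc (Suc n)) =
     [:- rec_alpha S (orth_poly S (Suc n)), 1:] * orth_poly S (Suc n)
     - smult (rec_beta S (orth_poly S (Suc n)) (orth_poly S n)) (orth_poly S n)"

lemma node_inner_commute: "node_inner S p q = node_inner S q p"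
  by (simp add: node_inner_def mult.commute)

lemma node_inner_diff_left: "node_inner S (p - q) r = node_inner S p r - node_inner S q r"
  by (simp add: node_inner_def sum_subtractf algebra_simps)

lemma node_inner_diff_right: "node_inner S r (p - q) = node_inner S r p - node_inner S r q"
  by (simp add: node_inner_def sum_subtractf algebra_simps)

lemma node_inner_smult_left: "node_inner S (smult c p) q = c * node_inner S p q"
  by (simp add: node_inner_def sum_distrib_left algebra_simps)

lemma node_inner_smult_right: "node_inner S p (smult c q) = c * node_inner S p q"
  by (simp add: node_inner_def sum_distrib_left algebra_simps)

lemma node_inner_sum_right:
  "node_inner S p (\<Sum>k\<in>A. f k) = (\<Sum>k\<in>A. node_inner S p (f k))"
  by (simp add: node_inner_def poly_sum sum_distrib_left sum.swap[of _ S])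

lemma node_inner_X_left: "node_inner S ([:0, 1:] * p) q = node_inner S p ([:0, 1:] * q)"
  by (simp add: node_inner_def algebra_simps)

lemma node_inner_self_nonneg: "node_inner S p p \<ge> 0"
  by (simp add: node_inner_def sum_nonneg)

lemma node_inner_eq_0_if_self_eq_0:
  assumes "finite S" and "node_inner S p p = 0"
  shows "node_inner S q p = 0"
proof -
  have "\<forall>t\<in>S. poly p t * poly p t = 0"
    using assms by (simp add: node_inner_def sum_nonneg_eq_0_iff)
  then show ?thesis
    by (simp add: node_inner_def)
qed

lemma orth_poly_monic: "degree (orth_poly S n) = n \<and> coeff (orth_poly S n) n = 1"
proof (induction n rule: induct_nat_012)
  case (ge2 n)
  let ?p = "orth_poly S (Suc n)" and ?q = "orth_poly S n"
  let ?r = "[:- rec_alpha S ?p, 1:] * ?p" and ?s = "smult (rec_beta S ?p ?q) ?q"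
  have "?p \<noteq> 0"
    using ge2 by auto
  then have r_degree: "degree ?r = Suc (Suc n)"
    using ge2 by (simp add: degree_mult_eq del: mult_pCons_left)
  have r_coeff: "coeff ?r (Suc (Suc n)) = 1"
    using ge2 by (simp add: coeff_eq_0)
  have "degree (- ?s) < degree ?r"
    using ge2 r_degree by simp
  then have "degree (?r - ?s) = Suc (Suc n)"
    using r_degree by (simp only: diff_conv_add_uminus degree_add_eq_left)
  moreover have "coeff ?s (Suc (Suc n)) = 0"
    using ge2 by (simp add: coeff_eq_0)
  ultimately show ?case
    using r_coeff by simp
qed simp_all

lemma degree_orth_poly [simp]: "degree (orth_poly S n) = n"
  using orth_poly_monic by blast

lemma coeff_orth_poly_degree [simp]: "coeff (orth_poly S n) n = 1"
  using orth_poly_monic by blast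

text \<open>The hypothesis is phrased via coefficients rather than as \<open>degree q < n\<close> so that it also
  covers the zero polynomial when \<open>n = 0\<close>.\<close>

lemma poly_eq_sum_monic_basis:
  fixes f :: "nat \<Rightarrow> 'a::comm_ring_1 poly"
  assumes "\<And>k. degree (f k) = k" and "\<And>k. coeff (f k) k = 1" and "\<forall>i\<ge>n. coeff q i = 0"
  shows "\<exists>c. q = (\<Sum>k<n. smult (c k) (f k))"
  using assms(3)
proof (induction n arbitrary: q)
  case 0
  then show ?case
    by (simp add: poly_eq_iff)
next
  case (Suc n)
  define r where "r = q - smult (coeff q n) (f n)"
  have "coeff q i = 0" if "n < i" for i
    using Suc.prems that by simp
  then have "\<forall>i\<ge>n. coeff r i = 0"
    using assms(1,2) by (auto simp: r_def coeff_eq_0 le_less)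
  then obtain c where "r = (\<Sum>k<n. smult (c k) (f k))"
    using Suc.IH by blast
  then have "q = (\<Sum>k<Suc n. smult ((c(n := coeff q n)) k) (f k))"
    by (simp add: r_def algebra_simps)
  then show ?case
    by blast
qed

lemma node_inner_eq_0_if_orthogonal_to_lower:
  assumes "\<And>k. k < n \<Longrightarrow> node_inner S p (orth_poly S k) = 0" and "degree q < n"
  shows "node_inner S p q = 0"
proof -
  obtain c where "q = (\<Sum>k<n. smult (c k) (orth_poly S k))"
    using poly_eq_sum_monic_basis[of "orth_poly S" n q] assms(2) by (auto simp: coeff_eq_0)
  then show ?thesis
    using assms(1) by (simp add: node_inner_sum_right node_inner_smult_right)
qed

lemma node_inner_linear_left:
  "node_inner S ([:- a, 1:] * p) q = node_inner S p ([:0, 1:] * q) - a * node_inner S p q"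
  by (simp add: node_inner_def algebra_simps sum_subtractf sum_distrib_left)

lemma node_inner_alpha_step:
  assumes "finite S"
  shows "node_inner S ([:- rec_alpha S p, 1:] * p) p = 0"
proof (cases "node_inner S p p = 0")
  case True
  then show ?thesis
    using node_inner_eq_0_if_self_eq_0[OF assms True]
    by (simp add: node_inner_linear_left rec_alpha_def)
next
  case False
  then show ?thesis
    by (simp add: node_inner_linear_left node_inner_X_left rec_alpha_def del: mult_pCons_left)
qed

text \<open>\<open>x P\<^sub>n - P\<^sub>n\<^sub>+\<^sub>1\<close> has degree at most \<open>n\<close>, since both polynomials are monic of degree \<open>n + 1\<close>.\<close>

lemma node_inner_orth_poly_X:
  assumes "\<And>q. degree q < Suc n \<Longrightarrow> node_inner S (orth_poly S (Suc n)) q = 0"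
  shows "node_inner S (orth_poly S (Suc n)) ([:0, 1:] * orth_poly S n)
       = node_inner S (orth_poly S (Suc n)) (orth_poly S (Suc n))"
proof -
  let ?d = "[:0, 1:] * orth_poly S n - orth_poly S (Suc n)"
  have "coeff ?d (Suc k) = 0" if "n \<le> k" for k
  proof (cases "k = n")
    case False
    with that have "degree (orth_poly S n) < k" "degree (orth_poly S (Suc n)) < Suc k"
      by auto
    then show ?thesis
      by (simp add: coeff_eq_0)
  qed simp
  then have "coeff ?d i = 0" if "n < i" for i
    using that by (cases i) auto
  then have "degree ?d < Suc n"
    by (simp add: degree_le le_imp_less_Suc)
  then have "node_inner S (orth_poly S (Suc n)) ?d = 0"
    by (rule assms)
  then show ?thesis
    by (simp add: node_inner_diff_right)
qed

lemma node_inner_orth_poly_eq_0: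
  assumes "finite S" and "degree q < n"
  shows "node_inner S (orth_poly S n) q = 0"
  using assms(2)
proof (induction n arbitrary: q rule: induct_nat_012)
  case 1
  have "node_inner S (orth_poly S (Suc 0)) (orth_poly S k) = 0" if "k < Suc 0" for k
    using that node_inner_alpha_step[OF assms(1), of 1] by simp
  then show ?case
    using "1" by (rule node_inner_eq_0_if_orthogonal_to_lower)
next
  case (ge2 n)
  let ?p = "orth_poly S (Suc n)" and ?q = "orth_poly S n"
  let ?a = "rec_alpha S ?p" and ?b = "rec_beta S ?p ?q"
  note IH_p = "ge2.IH"(2) and IH_q = "ge2.IH"(1)
  have inner_rec: "node_inner S (orth_poly S (Suc (Suc n))) r
      = node_inner S ([:- ?a, 1:] * ?p) r - ?b * node_inner S ?q r" for r
    by (simp add: node_inner_diff_left node_inner_smult_left del: mult_pCons_left)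
  have pq: "node_inner S ?p ?q = 0"
    using IH_p by simp
  have "node_inner S (orth_poly S (Suc (Suc n))) (orth_poly S k) = 0"
    if k: "k < Suc (Suc n)" for k
  proof -
    consider "k < n" | "k = n" | "k = Suc n"
      using k less_Suc_eq by auto
    then show ?thesis
    proof cases
      case 1
      then have "degree ([:0, 1:] * orth_poly S k) < Suc n"
        by (auto simp: degree_pCons_eq_if)
      then have "node_inner S ?p ([:0, 1:] * orth_poly S k) = 0"
        using IH_p by blast
      moreover have "node_inner S ?p (orth_poly S k) = 0" "node_inner S ?q (orth_poly S k) = 0"
        using 1 IH_p IH_q by auto
      ultimately show ?thesis
        unfolding inner_rec node_inner_linear_left by simp
    next
      case 2
      have X: "node_inner S ?p ([:0, 1:] * ?q) = node_inner S ?p ?p"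
        using IH_p by (rule node_inner_orth_poly_X)
      have "node_inner S ?p ?p = ?b * node_inner S ?q ?q"
      proof (cases "node_inner S ?q ?q = 0")
        case True
        then have "node_inner S ([:0, 1:] * ?p) ?q = 0"
          using assms(1) node_inner_eq_0_if_self_eq_0 by blast
        then show ?thesis
          using X True by (simp add: node_inner_X_left del: mult_pCons_left)
      qed (simp add: rec_beta_def)
      then show ?thesis
        using 2 X pq unfolding inner_rec node_inner_linear_left by simp
    next
      case 3
      have "node_inner S ?q ?p = 0"
        using pq by (simp add: node_inner_commute)
      then show ?thesis
        using node_inner_alpha_step[OF assms(1), of ?p] unfolding 3 inner_rec by simp
    qed
  qed
  then show ?case
    using "ge2.prems" by (rule node_inner_eq_0_if_orthogonal_to_lower)
qed simp

lemma node_inner_X_self_bounds: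
  assumes "S \<subseteq> {0..M}"
  shows "0 \<le> node_inner S ([:0, 1:] * p) p \<and> node_inner S ([:0, 1:] * p) p \<le> M * node_inner S p p"
proof -
  have "node_inner S ([:0, 1:] * p) p = (\<Sum>t\<in>S. t * (poly p t)\<^sup>2)"
    by (simp add: node_inner_def power2_eq_square algebra_simps)
  moreover have "(\<Sum>t\<in>S. t * (poly p t)\<^sup>2) \<le> (\<Sum>t\<in>S. M * (poly p t)\<^sup>2)"
    using assms by (intro sum_mono mult_right_mono) auto
  moreover have "0 \<le> (\<Sum>t\<in>S. t * (poly p t)\<^sup>2)"
    using assms by (intro sum_nonneg) auto
  ultimately show ?thesis
    by (simp add: node_inner_def sum_distrib_left power2_eq_square)
qed

lemma rec_alpha_bounds:
  assumes "S \<subseteq> {0..M}" and "0 \<le> M"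
  shows "0 \<le> rec_alpha S p \<and> rec_alpha S p \<le> M"
  using node_inner_X_self_bounds[OF assms(1), of p] node_inner_self_nonneg[of S p] assms(2)
  by (cases "node_inner S p p = 0") (auto simp: rec_alpha_def divide_le_eq)

lemma node_inner_X_X_le:
  assumes "S \<subseteq> {0..M}"
  shows "node_inner S ([:0, 1:] * p) ([:0, 1:] * p) \<le> M\<^sup>2 * node_inner S p p"
proof -
  have "node_inner S ([:0, 1:] * p) ([:0, 1:] * p) = (\<Sum>t\<in>S. t\<^sup>2 * (poly p t)\<^sup>2)"
    by (simp add: node_inner_def power2_eq_square algebra_simps)
  also have "\<dots> \<le> (\<Sum>t\<in>S. M\<^sup>2 * (poly p t)\<^sup>2)"
    using assms by (intro sum_mono mult_right_mono power_mono) auto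
  also have "\<dots> = M\<^sup>2 * node_inner S p p"
    by (simp add: node_inner_def sum_distrib_left power2_eq_square)
  finally show ?thesis .
qed

lemma node_inner_orth_poly_Suc_le:
  assumes "finite S"
  shows "node_inner S (orth_poly S (Suc n)) (orth_poly S (Suc n))
       \<le> node_inner S ([:0, 1:] * orth_poly S n) ([:0, 1:] * orth_poly S n)"
proof -
  let ?p = "orth_poly S (Suc n)" and ?y = "[:0, 1:] * orth_poly S n"
  have py: "node_inner S ?p ?y = node_inner S ?p ?p"
    using assms by (intro node_inner_orth_poly_X node_inner_orth_poly_eq_0)
  have "0 \<le> node_inner S (?y - ?p) (?y - ?p)"
    by (rule node_inner_self_nonneg)
  also have "\<dots> = node_inner S ?y ?y - 2 * node_inner S ?p ?y + node_inner S ?p ?p"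
    unfolding node_inner_diff_left node_inner_diff_right node_inner_commute[of S ?y ?p]
    by simp
  also have "\<dots> = node_inner S ?y ?y - node_inner S ?p ?p"
    unfolding py by simp
  finally show ?thesis
    by simp
qed

lemma rec_beta_bounds:
  assumes "finite S" and "S \<subseteq> {0..M}"
  shows "0 \<le> rec_beta S (orth_poly S (Suc n)) (orth_poly S n)
    \<and> rec_beta S (orth_poly S (Suc n)) (orth_poly S n) \<le> M\<^sup>2"
proof -
  let ?p = "orth_poly S (Suc n)" and ?q = "orth_poly S n"
  have "node_inner S ?p ?p \<le> M\<^sup>2 * node_inner S ?q ?q"
    using node_inner_orth_poly_Suc_le[OF assms(1), of n] node_inner_X_X_le[OF assms(2), of ?q]
    by linarith
  then show ?thesis
    using node_inner_self_nonneg[of S ?p] node_inner_self_nonneg[of S ?q]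
    by (cases "node_inner S ?q ?q = 0") (auto simp: rec_beta_def divide_le_eq)
qed

lemma abs_poly_orth_poly_le:
  assumes "finite S" and "S \<subseteq> {0..M}" and "x \<in> {0..M}"
  shows "\<bar>poly (orth_poly S n) x\<bar> \<le> (2 * M) ^ n"
proof (induction n rule: induct_nat_012)
  case 1
  then show ?case
    using rec_alpha_bounds[OF assms(2), of 1] assms(3) by auto
next
  case (ge2 n)
  let ?p = "orth_poly S (Suc n)" and ?q = "orth_poly S n"
  let ?a = "rec_alpha S ?p" and ?b = "rec_beta S ?p ?q"
  have M: "0 \<le> M"
    using assms(3) by simp
  have "\<bar>x - ?a\<bar> \<le> M"
    using rec_alpha_bounds[OF assms(2) M, of ?p] assms(3) by auto
  then have a_term: "\<bar>x - ?a\<bar> * \<bar>poly ?p x\<bar> \<le> M * (2 * M) ^ Suc n"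
    using "ge2.IH"(2) by (intro mult_mono) auto
  have b: "0 \<le> ?b" "?b \<le> M\<^sup>2"
    using rec_beta_bounds[OF assms(1,2), of n] by auto
  then have b_term: "?b * \<bar>poly ?q x\<bar> \<le> M\<^sup>2 * (2 * M) ^ n"
    using "ge2.IH"(1) by (intro mult_mono) auto
  have "poly (orth_poly S (Suc (Suc n))) x = (x - ?a) * poly ?p x - ?b * poly ?q x"
    by (simp add: algebra_simps)
  then have "\<bar>poly (orth_poly S (Suc (Suc n))) x\<bar>
      \<le> \<bar>x - ?a\<bar> * \<bar>poly ?p x\<bar> + ?b * \<bar>poly ?q x\<bar>"
    using abs_triangle_ineq4[of "(x - ?a) * poly ?p x" "?b * poly ?q x"] b(1)
    by (simp add: abs_mult)
  also have "\<dots> \<le> M * (2 * M) ^ Suc n + M\<^sup>2 * (2 * M) ^ n"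
    using a_term b_term by linarith
  also have "\<dots> \<le> (2 * M) ^ Suc (Suc n)"
    using M by (simp add: power2_eq_square algebra_simps)
  finally show ?case .
qed simp

definition poly_vec :: "nat \<Rightarrow> real poly \<Rightarrow> nat \<Rightarrow> real" where
  "poly_vec m p = (\<lambda>i. if i < m then poly p (real (i + 1)) else 0)"

lemma bvec_eq_poly_vec: "bvec m k = poly_vec m (monom 1 k)"
  unfolding bvec_def poly_vec_def poly_monom by (rule ext) simp

lemma inner_m_poly_vec:
  "inner_m m (poly_vec m p) (poly_vec m q) = node_inner (real ` {1..m}) p q"
proof -
  have "node_inner (real ` {1..m}) p q = (\<Sum>k\<in>{1..m}. poly p (real k) * poly q (real k))"
    by (simp add: node_inner_def sum.reindex)
  also have "\<dots> = (\<Sum>i<m. poly p (real (i + 1)) * poly q (real (i + 1)))"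
    by (simp add: sum.atLeast1_atMost_eq)
  finally show ?thesis
    by (simp add: inner_m_def poly_vec_def)
qed

lemma in_span_b_poly_vec:
  assumes "degree p < j"
  shows "in_span_b m j (poly_vec m p)"
proof -
  have "poly p x = (\<Sum>k<j. coeff p k * x ^ k)" for x :: real
  proof -
    have "(\<Sum>k<j. coeff p k * x ^ k) = (\<Sum>k\<le>degree p. coeff p k * x ^ k)"
      using assms by (intro sum.mono_neutral_right) (auto simp: coeff_eq_0 not_le)
    then show ?thesis
      by (simp add: poly_altdef)
  qed
  then have "poly_vec m p = (\<lambda>i. \<Sum>k<j. coeff p k * bvec m k i)"
    by (auto simp: poly_vec_def bvec_def)
  then show ?thesis
    unfolding in_span_b_def by (rule exI[of _ "coeff p"])
qed

lemma in_span_b_diff: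
  assumes "in_span_b m j u" and "in_span_b m j w"
  shows "in_span_b m j (\<lambda>i. u i - w i)"
proof -
  obtain a b where "u = (\<lambda>i. \<Sum>k<j. a k * bvec m k i)" and "w = (\<lambda>i. \<Sum>k<j. b k * bvec m k i)"
    using assms unfolding in_span_b_def by blast
  then have "(\<lambda>i. u i - w i) = (\<lambda>i. \<Sum>k<j. (a k - b k) * bvec m k i)"
    by (simp add: sum_subtractf algebra_simps)
  then show ?thesis
    unfolding in_span_b_def by (rule exI[of _ "\<lambda>k. a k - b k"])
qed

lemma inner_m_sum_right:
  "inner_m m x (\<lambda>i. \<Sum>k<j. a k * y k i) = (\<Sum>k<j. a k * inner_m m x (y k))"
proof -
  have "inner_m m x (\<lambda>i. \<Sum>k<j. a k * y k i) = (\<Sum>i<m. \<Sum>k<j. a k * (x i * y k i))"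
    by (simp add: inner_m_def sum_distrib_left mult.left_commute)
  also have "\<dots> = (\<Sum>k<j. \<Sum>i<m. a k * (x i * y k i))"
    by (rule sum.swap)
  finally show ?thesis
    by (simp add: inner_m_def sum_distrib_left)
qed

lemma in_span_b_orthogonal_eq_0:
  assumes "in_span_b m j u" and "\<forall>k<j. inner_m m u (bvec m k) = 0"
  shows "u = (\<lambda>_. 0)"
proof
  fix i
  obtain a where u: "u = (\<lambda>i. \<Sum>k<j. a k * bvec m k i)"
    using assms(1) unfolding in_span_b_def by blast
  have "inner_m m u u = (\<Sum>k<j. a k * inner_m m u (bvec m k))"
    using inner_m_sum_right[where x = u and a = a and y = "bvec m"] u by simp
  also have "\<dots> = 0"
    using assms(2) by simp
  finally have "\<forall>i<m. u i * u i = 0"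
    by (simp add: inner_m_def sum_nonneg_eq_0_iff)
  then show "u i = 0"
    by (cases "i < m") (auto simp: u bvec_def)
qed

lemma proj_b_eqI:
  assumes "in_span_b m j w" and "\<forall>k<j. inner_m m (\<lambda>i. v i - w i) (bvec m k) = 0"
  shows "proj_b m j v = w"
  unfolding proj_b_def
proof (rule the_equality)
  fix w'
  assume w': "in_span_b m j w' \<and> (\<forall>k<j. inner_m m (\<lambda>i. v i - w' i) (bvec m k) = 0)"
  have "\<forall>k<j. inner_m m (\<lambda>i. w' i - w i) (bvec m k) = 0"
  proof (intro allI impI)
    fix k
    assume "k < j"
    have "inner_m m (\<lambda>i. w' i - w i) (bvec m k)
        = inner_m m (\<lambda>i. v i - w i) (bvec m k) - inner_m m (\<lambda>i. v i - w' i) (bvec m k)"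
      by (simp add: inner_m_def sum_subtractf algebra_simps)
    then show "inner_m m (\<lambda>i. w' i - w i) (bvec m k) = 0"
      using assms(2) w' \<open>k < j\<close> by simp
  qed
  then have "(\<lambda>i. w' i - w i) = (\<lambda>_. 0)"
    using in_span_b_diff[of m j w' w] w' assms(1) by (intro in_span_b_orthogonal_eq_0) auto
  then show "w' = w"
    by (simp add: fun_eq_iff)
qed (use assms in blast)

lemma btilde_eq_poly_vec: "btilde m j = poly_vec m (orth_poly (real ` {1..m}) j)"
proof (cases "j = 0")
  case True
  then show ?thesis
    by (auto simp: btilde_def bvec_def poly_vec_def)
next
  case False
  let ?P = "orth_poly (real ` {1..m}) j"
  let ?q = "monom 1 j - ?P"
  have "coeff ?q i = 0" if "j \<le> i" for i
    using that by (cases "i = j") (auto simp: coeff_monom coeff_eq_0)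
  then have "degree ?q \<le> j - 1"
    using False by (intro degree_le) auto
  then have "degree ?q < j"
    using False by linarith
  moreover have diff: "(\<lambda>i. bvec m j i - poly_vec m ?q i) = poly_vec m ?P"
    by (auto simp: bvec_def poly_vec_def poly_monom)
  moreover have "inner_m m (poly_vec m ?P) (bvec m k) = 0" if "k < j" for k
    using that by (simp add: bvec_eq_poly_vec inner_m_poly_vec node_inner_orth_poly_eq_0
        degree_monom_eq)
  ultimately have "proj_b m j (bvec m j) = poly_vec m ?q"
    by (intro proj_b_eqI in_span_b_poly_vec) auto
  then show ?thesis
    using False diff by (simp add: btilde_def)
qed

lemma linf_le:
  assumes "0 < m" and "\<And>i. i < m \<Longrightarrow> \<bar>x i\<bar> \<le> B"
  shows "linf m x \<le> B"
  using assms unfolding linf_def by (subst Max_le_iff) auto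

theorem lemma10:
  fixes r :: nat
  shows "\<exists>c > 0. \<forall>m :: nat. m \<ge> 1 \<longrightarrow>
           (\<forall>j \<le> r. linf m (btilde m j) \<le> c * real m ^ j)"
proof (intro exI[of _ "2 ^ r"] conjI allI impI)
  fix m j :: nat
  assume "m \<ge> 1" and "j \<le> r"
  let ?S = "real ` {1..m}"
  have "\<bar>poly (orth_poly ?S j) (real (i + 1))\<bar> \<le> 2 ^ r * real m ^ j" if "i < m" for i
  proof -
    have "\<bar>poly (orth_poly ?S j) (real (i + 1))\<bar> \<le> (2 * real m) ^ j"
      using that by (intro abs_poly_orth_poly_le) auto
    also have "\<dots> \<le> 2 ^ r * real m ^ j"
      using \<open>j \<le> r\<close> by (simp add: power_mult_distrib mult_right_mono power_increasing)
    finally show ?thesis .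
  qed
  then show "linf m (btilde m j) \<le> 2 ^ r * real m ^ j"
    using \<open>m \<ge> 1\<close> by (intro linf_le) (auto simp: btilde_eq_poly_vec poly_vec_def)
qed simp

end
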